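(* Let $N$ be a Poisson random variable with mean $\bar m>0$ and $d_1,d_2,\dots$ i.i.d. positive random variables independent of $N$ with $\Pr(d_n\le\rho)=2\pi\int_0^\rho f(r)\,r\,dr$. Let $P'=\eta g\sum_{n=1}^N d_n^{-\alpha_1}$ and $p_0'=\Pr\big(P'\le\frac{P_c}{1-\beta D}\big)$. Then: (Matern) if $\mu^*>0$ satisfies $\int_0^{a^2}t^{-\alpha_1/2}e^{-\mu^*t^{-\alpha_1/2}}dt=\frac{a^2P_c(\eta g)^{-1}}{\bar m(1-\beta D)}$, then $$p_0'\le\exp\Big(\frac{\mu^*P_c}{(1-\beta D)\eta g}-\frac{\bar m}{a^2}\int_0^{a^2}\big(1-e^{-\mu^*t^{-\alpha_1/2}}\big)dt\Big);$$ (Thomas) if $\mu^*>0$ satisfies $\int_0^\infty\frac{e^{-t-\mu^*(\sqrt2\sigma)^{-\alpha_1}t^{-\alpha_1/2}}}{(\sqrt2\sigma)^{\alpha_1}t^{\alpha_1/2}}dt=\frac{P_c(\eta g)^{-1}}{\bar m(1-\beta D)}$, then $$p_0'\le\exp\Big(\frac{\mu^*P_c}{(1-\beta D)\eta g}-\bar m\int_0^\infty e^{-t}\big(1-e^{-\mu^*(\sqrt2\sigma)^{-\alpha_1}t^{-\alpha_1/2}}\big)dt\Big).$$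
   Context: Parameters: duty cycle $D\in(0,1]$, reflection coefficient $\beta\in(0,1]$, $\eta>0$, $g>0$, circuit power $P_c>0$, path-loss exponent $\alpha_1>0$. The function $f$ is one of: (Matern) $f(r)=\frac{1}{\pi a^2}$ for $0\le r\le a$, $0$ otherwise ($a>0$); (Thomas) $f(r)=\frac{1}{2\pi\sigma^2}e^{-r^2/(2\sigma^2)}$ ($\sigma>0$). Here $P'$ is the power received by a backscatter node from a Poisson cluster of power beacons and $p_0'$ its power-outage probability. *)

theory Defs
  imports "HOL-Probability.Probability"
begin

definition matern_f :: "real \<Rightarrow> real \<Rightarrow> real" where
  "matern_f a r = (if 0 \<le> r \<and> r \<le> a then 1 / (pi * a\<^sup>2) else 0)"

definition thomas_f :: "real \<Rightarrow> real \<Rightarrow> real" where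
  "thomas_f \<sigma> r = 1 / (2 * pi * \<sigma>\<^sup>2) * exp (- r\<^sup>2 / (2 * \<sigma>\<^sup>2))"

end

theory Submission
  imports Defs
begin

text \<open>
  Write \<open>S = (\<Sum>n<N. d n powr -\<alpha>)\<close>. By the Chernoff bound, for every \<open>\<mu> > 0\<close>,
  \<open>Pr (S \<le> c) \<le> exp (\<mu> c) E (exp (-\<mu> S))\<close>. By independence of \<open>N\<close> and the \<open>d n\<close>,
  \<open>E (exp (-\<mu> S))\<close> is the generating function of \<open>N\<close> at \<open>\<phi> = E (exp (-\<mu> d powr -\<alpha>))\<close>,
  which for a Poisson variable of mean \<open>m\<close> is \<open>exp (-m (1 - \<phi>))\<close>. Finally \<open>\<phi>\<close> is read off
  the distance distribution: \<open>d\<^sup>2\<close> is uniform on \<open>[0, a\<^sup>2]\<close> for the Matern cluster and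
  \<open>d\<^sup>2 / (2 \<sigma>\<^sup>2)\<close> is standard exponential for the Thomas cluster.
  The equation characterising \<open>\<mu>*\<close> only says that \<open>\<mu>*\<close> minimises the Chernoff exponent;
  the bound holds for every \<open>\<mu> > 0\<close>.
\<close>

lemma (in prob_space) expectation_indicator_times_prod_indep:
  fixes N :: "'a \<Rightarrow> nat" and d :: "nat \<Rightarrow> 'a \<Rightarrow> real" and G :: "real \<Rightarrow> real"
  assumes N_meas[measurable]: "N \<in> measurable M (count_space UNIV)"
    and N_distr: "distr M (count_space UNIV) N = measure_pmf p"
    and d_meas[measurable]: "\<And>n. d n \<in> borel_measurable M"
    and indep: "indep_vars (\<lambda>_. borel)
        (\<lambda>i \<omega>. case i of None \<Rightarrow> real (N \<omega>) | Some n \<Rightarrow> d n \<omega>) (UNIV :: nat option set)"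
    and G_meas[measurable]: "G \<in> borel_measurable borel"
    and G_bounded: "\<And>x. \<bar>G x\<bar> \<le> 1"
    and G_expectation: "\<And>n. expectation (\<lambda>\<omega>. G (d n \<omega>)) = \<phi>"
  shows "expectation (\<lambda>\<omega>. indicator {k} (N \<omega>) * (\<Prod>n<k. G (d n \<omega>))) = pmf p k * \<phi> ^ k"
proof -
  define X :: "nat option \<Rightarrow> 'a \<Rightarrow> real"
    where "X i \<omega> = (case i of None \<Rightarrow> real (N \<omega>) | Some n \<Rightarrow> d n \<omega>)" for i \<omega>
  define Y :: "nat option \<Rightarrow> real \<Rightarrow> real"
    where "Y i x = (case i of None \<Rightarrow> indicator {real k} x | Some n \<Rightarrow> G x)" for i x
  define I where "I = insert None (Some ` {..<k})"
  have "Y None = indicator {real k}" "\<And>n. Y (Some n) = G"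
    by (simp_all add: Y_def fun_eq_iff)
  then have Y_meas: "Y i \<in> borel_measurable borel" for i
    by (cases i) simp_all
  have "indep_vars (\<lambda>_. borel) (\<lambda>i \<omega>. Y i (X i \<omega>)) I"
    by (rule indep_vars_compose2[OF indep_vars_subset[OF indep[folded X_def]]])
      (simp_all add: Y_meas)
  then have "expectation (\<lambda>\<omega>. \<Prod>i\<in>I. Y i (X i \<omega>)) = (\<Prod>i\<in>I. expectation (\<lambda>\<omega>. Y i (X i \<omega>)))"
    by (intro indep_vars_lebesgue_integral)
      (auto simp: I_def Y_def X_def G_bounded intro!: integrable_const_bound[where B=1] split: option.split)
  moreover have "(\<lambda>\<omega>. \<Prod>i\<in>I. Y i (X i \<omega>)) = (\<lambda>\<omega>. indicator {k} (N \<omega>) * (\<Prod>n<k. G (d n \<omega>)))"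
    by (auto simp: fun_eq_iff I_def prod.reindex Y_def X_def indicator_def)
  moreover have "expectation (\<lambda>\<omega>. indicator {k} (N \<omega>) :: real) = pmf p k"
  proof -
    have "expectation (\<lambda>\<omega>. indicator {k} (N \<omega>) :: real)
        = integral\<^sup>L (distr M (count_space UNIV) N) (indicator {k})"
      by (subst integral_distr) auto
    then show ?thesis
      by (simp add: N_distr measure_pmf_single)
  qed
  moreover have "expectation (\<lambda>\<omega>. Y None (X None \<omega>)) = expectation (\<lambda>\<omega>. indicator {k} (N \<omega>) :: real)"
    by (auto simp: Y_def X_def indicator_def intro!: Bochner_Integration.integral_cong)
  ultimately show ?thesis
    by (simp add: I_def prod.reindex Y_def X_def G_expectation)
qed

lemma (in prob_space) nn_integral_prod_random_index:
  fixes N :: "'a \<Rightarrow> nat" and d :: "nat \<Rightarrow> 'a \<Rightarrow> real" and G :: "real \<Rightarrow> real"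
  assumes N_meas[measurable]: "N \<in> measurable M (count_space UNIV)"
    and N_distr: "distr M (count_space UNIV) N = measure_pmf p"
    and d_meas[measurable]: "\<And>n. d n \<in> borel_measurable M"
    and indep: "indep_vars (\<lambda>_. borel)
        (\<lambda>i \<omega>. case i of None \<Rightarrow> real (N \<omega>) | Some n \<Rightarrow> d n \<omega>) (UNIV :: nat option set)"
    and G_meas[measurable]: "G \<in> borel_measurable borel"
    and G_nonneg: "\<And>x. 0 \<le> G x" and G_le_1: "\<And>x. G x \<le> 1"
    and G_expectation: "\<And>n. expectation (\<lambda>\<omega>. G (d n \<omega>)) = \<phi>"
  shows "(\<integral>\<^sup>+\<omega>. ennreal (\<Prod>n<N \<omega>. G (d n \<omega>)) \<partial>M) = (\<Sum>k. ennreal (pmf p k * \<phi> ^ k))"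
proof -
  define F where "F k \<omega> = indicator {k} (N \<omega>) * (\<Prod>n<k. G (d n \<omega>))" for k \<omega>
  have F_nonneg: "0 \<le> F k \<omega>" for k \<omega>
    by (simp add: F_def G_nonneg prod_nonneg)
  have F_le_1: "F k \<omega> \<le> 1" for k \<omega>
    unfolding F_def by (intro mult_le_one prod_le_1 prod_nonneg) (simp_all add: G_nonneg G_le_1)
  have F_meas[measurable]: "F k \<in> borel_measurable M" for k
  proof -
    have "(\<lambda>\<omega>. indicator {k} (N \<omega>) :: real) \<in> borel_measurable M"
      by (rule measurable_compose[OF N_meas]) simp
    then show ?thesis
      unfolding F_def by measurable
  qed
  have pointwise: "ennreal (\<Prod>n<N \<omega>. G (d n \<omega>)) = (\<Sum>k. ennreal (F k \<omega>))" for \<omega>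
  proof -
    have "(\<lambda>k. ennreal (F k \<omega>)) = (\<lambda>k. if k = N \<omega> then ennreal (\<Prod>n<N \<omega>. G (d n \<omega>)) else 0)"
      by (auto simp: F_def fun_eq_iff)
    then show ?thesis
      using sums_single[of "N \<omega>" "\<lambda>_. ennreal (\<Prod>n<N \<omega>. G (d n \<omega>))"] by (simp add: sums_iff)
  qed
  have "(\<integral>\<^sup>+\<omega>. ennreal (\<Prod>n<N \<omega>. G (d n \<omega>)) \<partial>M) = (\<Sum>k. \<integral>\<^sup>+\<omega>. ennreal (F k \<omega>) \<partial>M)"
    unfolding pointwise by (rule nn_integral_suminf) measurable
  also have "\<dots> = (\<Sum>k. ennreal (expectation (F k)))"
    by (intro suminf_cong nn_integral_eq_integral integrable_const_bound[where B=1])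
      (simp_all add: F_nonneg F_le_1)
  also have "\<dots> = (\<Sum>k. ennreal (pmf p k * \<phi> ^ k))"
    using expectation_indicator_times_prod_indep[OF N_meas N_distr d_meas indep G_meas _ G_expectation]
      G_nonneg G_le_1 by (simp add: F_def[abs_def] abs_le_iff)
  finally show ?thesis .
qed

lemma poisson_pmf_generating_sums:
  assumes "0 < m"
  shows "(\<lambda>k. pmf (poisson_pmf m) k * z ^ k) sums exp (- m * (1 - z))"
proof -
  have "(\<lambda>k. (m * z) ^ k /\<^sub>R fact k * exp (- m)) sums (exp (m * z) * exp (- m))"
    by (rule sums_mult2[OF exp_converges])
  then show ?thesis
    using assms by (simp add: power_mult_distrib field_simps mult_exp_exp)
qed

lemma (in prob_space) prob_compound_poisson_le:
  fixes N :: "'a \<Rightarrow> nat" and d :: "nat \<Rightarrow> 'a \<Rightarrow> real" and w :: "real \<Rightarrow> real"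
  assumes m: "0 < m"
    and N_meas[measurable]: "N \<in> measurable M (count_space UNIV)"
    and N_poisson: "distr M (count_space UNIV) N = measure_pmf (poisson_pmf m)"
    and d_meas[measurable]: "\<And>n. d n \<in> borel_measurable M"
    and indep: "indep_vars (\<lambda>_. borel)
        (\<lambda>i \<omega>. case i of None \<Rightarrow> real (N \<omega>) | Some n \<Rightarrow> d n \<omega>) (UNIV :: nat option set)"
    and w_meas[measurable]: "w \<in> borel_measurable borel" and w_nonneg: "\<And>x. 0 \<le> w x"
    and \<mu>: "0 < \<mu>"
    and \<phi>: "\<And>n. expectation (\<lambda>\<omega>. exp (- \<mu> * w (d n \<omega>))) = \<phi>"
  shows "prob {\<omega> \<in> space M. (\<Sum>n<N \<omega>. w (d n \<omega>)) \<le> c} \<le> exp (\<mu> * c - m * (1 - \<phi>))"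
proof -
  define S where "S \<omega> = (\<Sum>n<N \<omega>. w (d n \<omega>))" for \<omega>
  have S_meas[measurable]: "S \<in> borel_measurable M"
    unfolding S_def by measurable
  have exp_S: "exp (- \<mu> * S \<omega>) = (\<Prod>n<N \<omega>. exp (- \<mu> * w (d n \<omega>)))" for \<omega>
    by (simp add: S_def sum_distrib_left exp_sum)
  have "emeasure M {\<omega> \<in> space M. S \<omega> \<le> c}
      \<le> ennreal (exp (\<mu> * c)) * (\<integral>\<^sup>+\<omega>. ennreal (exp (- \<mu> * S \<omega>)) * indicator (space M) \<omega> \<partial>M)"
    by (rule Chernoff_ineq_nn_integral_le[OF \<mu>]) simp_all
  also have "(\<integral>\<^sup>+\<omega>. ennreal (exp (- \<mu> * S \<omega>)) * indicator (space M) \<omega> \<partial>M)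
      = (\<integral>\<^sup>+\<omega>. ennreal (\<Prod>n<N \<omega>. exp (- \<mu> * w (d n \<omega>))) \<partial>M)"
    unfolding exp_S by (intro nn_integral_cong) simp
  also have "\<dots> = (\<Sum>k. ennreal (pmf (poisson_pmf m) k * \<phi> ^ k))"
    by (rule nn_integral_prod_random_index[OF N_meas N_poisson d_meas indep _ _ _ \<phi>])
      (use \<mu> w_nonneg in \<open>simp_all add: mult_nonneg_nonneg\<close>)
  also have "\<dots> = ennreal (exp (- m * (1 - \<phi>)))"
  proof (rule suminf_ennreal_eq[OF _ poisson_pmf_generating_sums[OF m]])
    have "0 \<le> \<phi>"
      using \<phi>[of 0] by (metis exp_ge_zero integral_nonneg_AE AE_I2)
    then show "0 \<le> pmf (poisson_pmf m) k * \<phi> ^ k" for k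
      by simp
  qed
  finally show ?thesis
    by (simp add: S_def emeasure_eq_measure ennreal_mult'[symmetric] mult_exp_exp)
qed

lemma matern_radial_cdf:
  assumes a: "0 < a" and \<rho>: "0 \<le> \<rho>" "\<rho> \<le> a"
  shows "2 * pi * (LBINT r=0..\<rho>. matern_f a r * r) = \<rho>\<^sup>2 / a\<^sup>2"
proof -
  have "(LBINT r=0..\<rho>. matern_f a r * r) = (LBINT r=0..\<rho>. r / (pi * a\<^sup>2))"
    using \<rho> by (intro interval_integral_cong) (auto simp: matern_f_def einterval_def)
  also have "\<dots> = (LBINT r=ereal 0..ereal \<rho>. r / (pi * a\<^sup>2))"
    by (simp add: zero_ereal_def)
  also have "\<dots> = \<rho>\<^sup>2 / (2 * pi * a\<^sup>2) - 0\<^sup>2 / (2 * pi * a\<^sup>2)"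
    using \<rho>
  proof (intro interval_integral_FTC_finite continuous_intros)
    fix x :: real
    show "((\<lambda>r. r\<^sup>2 / (2 * pi * a\<^sup>2)) has_vector_derivative x / (pi * a\<^sup>2)) (at x within {min 0 \<rho>..max 0 \<rho>})"
      unfolding has_real_derivative_iff_has_vector_derivative[symmetric]
      using a by (intro derivative_eq_intros refl) (auto simp: field_simps power2_eq_square)
  qed (use a in auto)
  finally show ?thesis
    using a by (simp add: field_simps)
qed

lemma thomas_radial_cdf:
  assumes \<sigma>: "0 < \<sigma>"
  shows "2 * pi * (LBINT r=0..\<rho>. thomas_f \<sigma> r * r) = 1 - exp (- \<rho>\<^sup>2 / (2 * \<sigma>\<^sup>2))"
proof -
  define F where "F r = - exp (- r\<^sup>2 / (2 * \<sigma>\<^sup>2)) / (2 * pi)" for r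
  have "(F has_real_derivative thomas_f \<sigma> x * x) (at x within A)" for x A
    using \<sigma> unfolding F_def thomas_f_def
    by (auto intro!: derivative_eq_intros simp: field_simps power2_eq_square)
  then have "(LBINT r=ereal 0..ereal \<rho>. thomas_f \<sigma> r * r) = F \<rho> - F 0"
    unfolding thomas_f_def using \<sigma>
    by (intro interval_integral_FTC_finite)
      (auto intro!: continuous_intros simp: has_real_derivative_iff_has_vector_derivative thomas_f_def)
  then show ?thesis
    by (simp add: F_def zero_ereal_def field_simps)
qed

lemma (in prob_space) matern_distance_sq_uniform:
  fixes X :: "'a \<Rightarrow> real"
  assumes X_meas[measurable]: "X \<in> borel_measurable M"
    and X_pos: "\<And>\<omega>. \<omega> \<in> space M \<Longrightarrow> 0 < X \<omega>"
    and X_cdf: "\<And>\<rho>. 0 \<le> \<rho> \<Longrightarrow> prob {\<omega> \<in> space M. X \<omega> \<le> \<rho>} = 2 * pi * (LBINT r=0..\<rho>. matern_f a r * r)"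
    and a: "0 < a"
  shows "distributed M lborel (\<lambda>\<omega>. (X \<omega>)\<^sup>2) (\<lambda>t. indicator {0..a\<^sup>2} t / measure lborel {0..a\<^sup>2})"
proof (rule uniform_distrI_borel_atLeastAtMost)
  fix t :: real assume t: "0 \<le> t" "t \<le> a\<^sup>2"
  have "(X \<omega>)\<^sup>2 \<le> t \<longleftrightarrow> X \<omega> \<le> sqrt t" if "\<omega> \<in> space M" for \<omega>
  proof -
    have "X \<omega> = sqrt ((X \<omega>)\<^sup>2)"
      using X_pos[OF that] by simp
    then show ?thesis
      by (metis real_sqrt_le_iff)
  qed
  then have "{\<omega> \<in> space M. (X \<omega>)\<^sup>2 \<le> t} = {\<omega> \<in> space M. X \<omega> \<le> sqrt t}"
    by blast
  moreover have "sqrt t \<le> a"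
    using t a by (metis abs_of_pos real_sqrt_abs real_sqrt_le_mono)
  ultimately show "prob {\<omega> \<in> space M. (X \<omega>)\<^sup>2 \<le> t} = (t - 0) / (a\<^sup>2 - 0)"
    using X_cdf[of "sqrt t"] matern_radial_cdf[OF a, of "sqrt t"] t by simp
qed (use a in simp_all)

lemma (in prob_space) thomas_distance_sq_exponential:
  fixes X :: "'a \<Rightarrow> real"
  assumes X_meas[measurable]: "X \<in> borel_measurable M"
    and X_pos: "\<And>\<omega>. \<omega> \<in> space M \<Longrightarrow> 0 < X \<omega>"
    and X_cdf: "\<And>\<rho>. 0 \<le> \<rho> \<Longrightarrow> prob {\<omega> \<in> space M. X \<omega> \<le> \<rho>} = 2 * pi * (LBINT r=0..\<rho>. thomas_f \<sigma> r * r)"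
    and \<sigma>: "0 < \<sigma>"
  shows "distributed M lborel (\<lambda>\<omega>. (X \<omega> / (sqrt 2 * \<sigma>))\<^sup>2) (exponential_density 1)"
proof (rule exponential_distributedI)
  fix t :: real assume t: "0 \<le> t"
  have "(X \<omega> / (sqrt 2 * \<sigma>))\<^sup>2 \<le> t \<longleftrightarrow> X \<omega> \<le> sqrt t * (sqrt 2 * \<sigma>)" if "\<omega> \<in> space M" for \<omega>
  proof -
    have "X \<omega> / (sqrt 2 * \<sigma>) = sqrt ((X \<omega> / (sqrt 2 * \<sigma>))\<^sup>2)"
      using X_pos[OF that] \<sigma> by simp
    then have "(X \<omega> / (sqrt 2 * \<sigma>))\<^sup>2 \<le> t \<longleftrightarrow> X \<omega> / (sqrt 2 * \<sigma>) \<le> sqrt t"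
      by (metis real_sqrt_le_iff)
    then show ?thesis
      using \<sigma> by (simp add: divide_le_eq)
  qed
  then have "{\<omega> \<in> space M. (X \<omega> / (sqrt 2 * \<sigma>))\<^sup>2 \<le> t} = {\<omega> \<in> space M. X \<omega> \<le> sqrt t * (sqrt 2 * \<sigma>)}"
    by blast
  moreover have "(sqrt t * (sqrt 2 * \<sigma>))\<^sup>2 / (2 * \<sigma>\<^sup>2) = t"
    using t \<sigma> by (simp add: power_mult_distrib)
  ultimately have "prob {\<omega> \<in> space M. (X \<omega> / (sqrt 2 * \<sigma>))\<^sup>2 \<le> t} = 1 - exp (- t)"
    using X_cdf[of "sqrt t * (sqrt 2 * \<sigma>)"] thomas_radial_cdf[OF \<sigma>, of "sqrt t * (sqrt 2 * \<sigma>)"] t \<sigma>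
    by simp
  then show "emeasure M {\<omega> \<in> space M. (X \<omega> / (sqrt 2 * \<sigma>))\<^sup>2 \<le> t} = 1 - ennreal (exp (- t * 1))"
    by (simp add: emeasure_eq_measure ennreal_minus flip: ennreal_1)
qed simp_all

lemma power2_powr_half:
  fixes x :: real
  assumes "0 \<le> x"
  shows "(x\<^sup>2) powr (y / 2) = x powr y"
proof (cases "x = 0")
  case False
  then have "x\<^sup>2 = x powr 2"
    using assms by (simp add: powr_realpow)
  then show ?thesis
    by (simp add: powr_powr)
qed simp

lemma (in prob_space) expectation_one_minus_exp_neg:
  fixes Z :: "'a \<Rightarrow> real"
  assumes "0 \<le> \<mu>" and "\<And>\<omega>. 0 \<le> Z \<omega>" and [measurable]: "Z \<in> borel_measurable M"
  shows "expectation (\<lambda>\<omega>. exp (- \<mu> * Z \<omega>)) = 1 - expectation (\<lambda>\<omega>. 1 - exp (- \<mu> * Z \<omega>))"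
proof -
  have "integrable M (\<lambda>\<omega>. exp (- \<mu> * Z \<omega>))"
  proof (rule integrable_const_bound[where B=1])
    have "0 \<le> \<mu> * Z \<omega>" for \<omega>
      using assms by (simp add: mult_nonneg_nonneg)
    then show "AE \<omega> in M. norm (exp (- \<mu> * Z \<omega>)) \<le> 1"
      by simp
  qed measurable
  then show ?thesis
    by (simp add: Bochner_Integration.integral_diff prob_space)
qed

lemma (in prob_space) matern_expectation_exp_neg_powr:
  fixes X :: "'a \<Rightarrow> real"
  assumes X_meas[measurable]: "X \<in> borel_measurable M"
    and X_pos: "\<And>\<omega>. \<omega> \<in> space M \<Longrightarrow> 0 < X \<omega>"
    and X_cdf: "\<And>\<rho>. 0 \<le> \<rho> \<Longrightarrow> prob {\<omega> \<in> space M. X \<omega> \<le> \<rho>} = 2 * pi * (LBINT r=0..\<rho>. matern_f a r * r)"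
    and a: "0 < a" and \<mu>: "0 \<le> \<mu>"
  shows "expectation (\<lambda>\<omega>. exp (- \<mu> * X \<omega> powr (- \<alpha>)))
     = 1 - 1 / a\<^sup>2 * (LINT t:{0..a\<^sup>2}|lborel. 1 - exp (- \<mu> * t powr (- \<alpha> / 2)))"
proof -
  define h where "h t = 1 - exp (- \<mu> * t powr (- \<alpha> / 2))" for t :: real
  have "expectation (\<lambda>\<omega>. 1 - exp (- \<mu> * X \<omega> powr (- \<alpha>))) = expectation (\<lambda>\<omega>. h ((X \<omega>)\<^sup>2))"
    using X_pos by (intro Bochner_Integration.integral_cong)
      (simp_all add: h_def power2_powr_half[of _ "- \<alpha>", simplified] less_imp_le)
  also have "\<dots> = (\<integral>t. indicator {0..a\<^sup>2} t / measure lborel {0..a\<^sup>2} * h t \<partial>lborel)"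
    by (rule distributed_integral[OF matern_distance_sq_uniform[OF X_meas X_pos X_cdf a], symmetric])
      (simp_all add: h_def)
  also have "\<dots> = 1 / a\<^sup>2 * (LINT t:{0..a\<^sup>2}|lborel. h t)"
    by (simp add: set_lebesgue_integral_def)
  finally show ?thesis
    using expectation_one_minus_exp_neg[OF \<mu>, of "\<lambda>\<omega>. X \<omega> powr (- \<alpha>)"] by (simp add: h_def)
qed

lemma (in prob_space) thomas_expectation_exp_neg_powr:
  fixes X :: "'a \<Rightarrow> real"
  assumes X_meas[measurable]: "X \<in> borel_measurable M"
    and X_pos: "\<And>\<omega>. \<omega> \<in> space M \<Longrightarrow> 0 < X \<omega>"
    and X_cdf: "\<And>\<rho>. 0 \<le> \<rho> \<Longrightarrow> prob {\<omega> \<in> space M. X \<omega> \<le> \<rho>} = 2 * pi * (LBINT r=0..\<rho>. thomas_f \<sigma> r * r)"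
    and \<sigma>: "0 < \<sigma>" and \<mu>: "0 \<le> \<mu>"
  shows "expectation (\<lambda>\<omega>. exp (- \<mu> * X \<omega> powr (- \<alpha>)))
     = 1 - (LINT t:{0<..}|lborel. exp (- t) * (1 - exp (- \<mu> * (sqrt 2 * \<sigma>) powr (- \<alpha>) * t powr (- \<alpha> / 2))))"
proof -
  define c where "c = sqrt 2 * \<sigma>"
  have c: "0 < c"
    using \<sigma> by (simp add: c_def)
  define h where "h t = 1 - exp (- \<mu> * c powr (- \<alpha>) * t powr (- \<alpha> / 2))" for t :: real
  have h_meas[measurable]: "h \<in> borel_measurable borel"
    unfolding h_def by measurable
  have "h ((X \<omega> / c)\<^sup>2) = 1 - exp (- \<mu> * X \<omega> powr (- \<alpha>))" if "\<omega> \<in> space M" for \<omega>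
    using X_pos[OF that] c
    by (simp add: h_def power2_powr_half[of _ "- \<alpha>", simplified] powr_divide mult.assoc)
  then have "expectation (\<lambda>\<omega>. 1 - exp (- \<mu> * X \<omega> powr (- \<alpha>))) = expectation (\<lambda>\<omega>. h ((X \<omega> / c)\<^sup>2))"
    by (intro Bochner_Integration.integral_cong) simp_all
  also have "\<dots> = (\<integral>t. exponential_density 1 t * h t \<partial>lborel)"
    unfolding c_def
    by (rule distributed_integral[OF thomas_distance_sq_exponential[OF X_meas X_pos X_cdf \<sigma>], symmetric])
      (simp_all add: h_def exponential_density_nonneg)
  also have "\<dots> = (LINT t:{0<..}|lborel. exp (- t) * h t)"
    unfolding set_lebesgue_integral_def
    by (intro integral_cong_AE)
      (auto intro!: eventually_mono[OF AE_lborel_singleton[of 0]] simp: exponential_density_def indicator_def)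
  finally show ?thesis
    using expectation_one_minus_exp_neg[OF \<mu>, of "\<lambda>\<omega>. X \<omega> powr (- \<alpha>)"] by (simp add: h_def c_def)
qed

theorem lemma5:
  fixes M :: "'w measure" and N :: "'w \<Rightarrow> nat" and d :: "nat \<Rightarrow> 'w \<Rightarrow> real"
    and f :: "real \<Rightarrow> real"
    and m D \<beta> \<eta> g Pc \<alpha>1 :: real
  assumes "prob_space M"
    and "0 < m"
    and "0 < D" "D \<le> 1" "0 < \<beta>" "\<beta> \<le> 1" "0 < \<eta>" "0 < g" "0 < Pc" "0 < \<alpha>1"
    and N_meas: "N \<in> measurable M (count_space UNIV)"
    and N_poisson: "distr M (count_space UNIV) N = measure_pmf (poisson_pmf m)"
    and d_meas: "\<And>n. d n \<in> borel_measurable M"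
    and d_pos: "\<And>n \<omega>. \<omega> \<in> space M \<Longrightarrow> 0 < d n \<omega>"
    and d_cdf: "\<And>n \<rho>. 0 \<le> \<rho> \<Longrightarrow>
        measure M {\<omega> \<in> space M. d n \<omega> \<le> \<rho>} = 2 * pi * (LBINT r=0..\<rho>. f r * r)"
    and indep: "prob_space.indep_vars M (\<lambda>_. borel)
        (\<lambda>i \<omega>. case i of None \<Rightarrow> real (N \<omega>) | Some n \<Rightarrow> d n \<omega>) (UNIV :: nat option set)"
  defines "P' \<equiv> (\<lambda>\<omega>. \<eta> * g * (\<Sum>n<N \<omega>. d n \<omega> powr (- \<alpha>1)))"
  defines "p0' \<equiv> measure M {\<omega> \<in> space M. P' \<omega> \<le> Pc / (1 - \<beta> * D)}"
  shows
    "(\<forall>a \<mu>. 0 < a \<longrightarrow> f = matern_f a \<longrightarrow> 0 < \<mu> \<longrightarrow>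
        (LINT t:{0..a\<^sup>2}|lborel. t powr (-\<alpha>1/2) * exp (- \<mu> * t powr (-\<alpha>1/2)))
          = a\<^sup>2 * Pc * inverse (\<eta> * g) / (m * (1 - \<beta> * D)) \<longrightarrow>
        p0' \<le> exp (\<mu> * Pc / ((1 - \<beta> * D) * \<eta> * g)
          - m / a\<^sup>2 * (LINT t:{0..a\<^sup>2}|lborel. 1 - exp (- \<mu> * t powr (-\<alpha>1/2)))))
   \<and> (\<forall>\<sigma> \<mu>. 0 < \<sigma> \<longrightarrow> f = thomas_f \<sigma> \<longrightarrow> 0 < \<mu> \<longrightarrow>
        (LINT t:{0<..}|lborel. exp (- t - \<mu> * (sqrt 2 * \<sigma>) powr (-\<alpha>1) * t powr (-\<alpha>1/2))
            / ((sqrt 2 * \<sigma>) powr \<alpha>1 * t powr (\<alpha>1/2)))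
          = Pc * inverse (\<eta> * g) / (m * (1 - \<beta> * D)) \<longrightarrow>
        p0' \<le> exp (\<mu> * Pc / ((1 - \<beta> * D) * \<eta> * g)
          - m * (LINT t:{0<..}|lborel. exp (- t) * (1 - exp (- \<mu> * (sqrt 2 * \<sigma>) powr (-\<alpha>1) * t powr (-\<alpha>1/2))))))"
proof -
  interpret prob_space M by fact
  have p0'_le: "p0' \<le> exp (\<mu> * Pc / ((1 - \<beta> * D) * \<eta> * g) - m * (1 - \<phi>))"
    if \<mu>: "0 < \<mu>" and \<phi>: "\<And>n. expectation (\<lambda>\<omega>. exp (- \<mu> * d n \<omega> powr (- \<alpha>1))) = \<phi>"
    for \<mu> \<phi>
  proof -
    define K where "K = Pc / (1 - \<beta> * D)"
    have "0 < \<eta> * g"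
      using assms by simp
    then have "{\<omega> \<in> space M. P' \<omega> \<le> K}
        = {\<omega> \<in> space M. (\<Sum>n<N \<omega>. d n \<omega> powr (- \<alpha>1)) \<le> K / (\<eta> * g)}"
      by (auto simp: P'_def pos_le_divide_eq mult.commute)
    then have "p0' \<le> exp (\<mu> * (K / (\<eta> * g)) - m * (1 - \<phi>))"
      unfolding p0'_def K_def[symmetric]
      using prob_compound_poisson_le[OF \<open>0 < m\<close> N_meas N_poisson d_meas indep _ _ \<mu> \<phi>,
          of "K / (\<eta> * g)"]
      by simp
    also have "\<mu> * (K / (\<eta> * g)) = \<mu> * Pc / ((1 - \<beta> * D) * \<eta> * g)"
      by (simp add: K_def mult.assoc)
    finally show ?thesis .
  qed
  show ?thesis
  proof (intro conjI allI impI)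
    fix a \<mu> :: real assume "0 < a" "f = matern_f a" "0 < \<mu>"
    then show "p0' \<le> exp (\<mu> * Pc / ((1 - \<beta> * D) * \<eta> * g)
          - m / a\<^sup>2 * (LINT t:{0..a\<^sup>2}|lborel. 1 - exp (- \<mu> * t powr (-\<alpha>1/2))))"
      using p0'_le[OF \<open>0 < \<mu>\<close> matern_expectation_exp_neg_powr[OF d_meas d_pos]] d_cdf by simp
  next
    fix \<sigma> \<mu> :: real assume "0 < \<sigma>" "f = thomas_f \<sigma>" "0 < \<mu>"
    then show "p0' \<le> exp (\<mu> * Pc / ((1 - \<beta> * D) * \<eta> * g)
          - m * (LINT t:{0<..}|lborel. exp (- t) * (1 - exp (- \<mu> * (sqrt 2 * \<sigma>) powr (-\<alpha>1) * t powr (-\<alpha>1/2)))))"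
      using p0'_le[OF \<open>0 < \<mu>\<close> thomas_expectation_exp_neg_powr[OF d_meas d_pos]] d_cdf by simp
  qed
qed

end
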